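(* Let $A$ be a symmetric nonnegative $r$-matrix of order $n$ and let $p>1$. If $\lambda\in\mathbb{R}$ and $\mathbf{x}=(x_1,\ldots,x_n)\in\mathbb{S}^{n-1}_p$ satisfy \[ \lambda x_k|x_k|^{p-2}=\frac1r\frac{\partial P_A(\mathbf{x})}{\partial x_k},\qquad k=1,\ldots,n, \] then $|\lambda|\leq\eta^{(p)}(A)$.
   Context: A cubical $r$-matrix of order $n$ is a function $A$ on $[n]^r$ with entries $a_{i_1,\ldots,i_r}$; symmetric means invariant under permutations of indices. $P_A(\mathbf{x})=\sum_{i_1,\ldots,i_r}a_{i_1,\ldots,i_r}x_{i_1}\cdots x_{i_r}$. $\mathbb{S}^{n-1}_p=\{\mathbf{x}\in\mathbb{R}^n:\sum|x_i|^p=1\}$ and $\eta^{(p)}(A)=\max\{|P_A(\mathbf{x})|:\mathbf{x}\in\mathbb{S}^{n-1}_p\}$. The expression $x_k|x_k|^{p-2}$ is interpreted as $0$ when $x_k=0$. *)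

theory Defs
  imports "HOL-Analysis.Analysis"
begin

text \<open>Index tuples of [n]^r, with [n] rendered as {0..<n}, are lists of length r.
A cubical r-matrix of order n is a function on such lists (values elsewhere irrelevant).\<close>

definition idx :: "nat \<Rightarrow> nat \<Rightarrow> nat list set" where
  "idx r n = {is. length is = r \<and> set is \<subseteq> {..<n}}"

definition symmetric_rmatrix :: "nat \<Rightarrow> nat \<Rightarrow> (nat list \<Rightarrow> real) \<Rightarrow> bool" where
  "symmetric_rmatrix r n A \<longleftrightarrow>
     (\<forall>is\<in>idx r n. \<forall>js. mset js = mset is \<longrightarrow> A js = A is)"

definition nonneg_rmatrix :: "nat \<Rightarrow> nat \<Rightarrow> (nat list \<Rightarrow> real) \<Rightarrow> bool" where
  "nonneg_rmatrix r n A \<longleftrightarrow> (\<forall>is\<in>idx r n. A is \<ge> 0)"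

definition PA :: "nat \<Rightarrow> nat \<Rightarrow> (nat list \<Rightarrow> real) \<Rightarrow> (nat \<Rightarrow> real) \<Rightarrow> real" where
  "PA r n A x = (\<Sum>is\<in>idx r n. A is * prod_list (map x is))"

definition sphere_p :: "nat \<Rightarrow> real \<Rightarrow> (nat \<Rightarrow> real) set" where
  "sphere_p n p = {x. (\<Sum>i<n. \<bar>x i\<bar> powr p) = 1}"

definition eta :: "nat \<Rightarrow> nat \<Rightarrow> real \<Rightarrow> (nat list \<Rightarrow> real) \<Rightarrow> real" where
  "eta r n p A = (SUP x\<in>sphere_p n p. \<bar>PA r n A x\<bar>)"

definition partial :: "((nat \<Rightarrow> real) \<Rightarrow> real) \<Rightarrow> nat \<Rightarrow> (nat \<Rightarrow> real) \<Rightarrow> real" where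
  "partial F k x = deriv (\<lambda>t. F (x(k := t))) (x k)"

end

theory Submission
  imports Defs
begin

text \<open>Since \<open>P_A\<close> is homogeneous of degree \<open>r\<close>, Euler's identity gives
  \<open>\<Sum>\<^sub>k x\<^sub>k \<partial>\<^sub>k P_A(x) = r P_A(x)\<close>. Multiplying the \<open>k\<close>-th eigenequation by \<open>x\<^sub>k\<close>
  and summing over \<open>k\<close> yields \<open>\<lambda> \<Sum>\<^sub>k |x\<^sub>k|\<^sup>p = P_A(x)\<close>, so \<open>\<lambda> = P_A(x)\<close> for \<open>x\<close> on
  the unit \<open>p\<close>-sphere, and \<open>|P_A(x)|\<close> is one of the values whose supremum is \<open>\<eta>\<close>.\<close>

lemma prod_list_map_fun_upd:
  fixes f :: "'a \<Rightarrow> 'b::comm_monoid_mult"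
  shows "prod_list (map (f(k := t)) xs) =
           t ^ count_list xs k * prod_list (map f (filter (\<lambda>j. j \<noteq> k) xs))"
  by (induction xs) (simp_all add: ac_simps)

lemma mult_deriv_sum_power:
  fixes c :: "'a \<Rightarrow> real"
  assumes "finite I"
  shows "x * deriv (\<lambda>t. \<Sum>i\<in>I. c i * t ^ m i) x = (\<Sum>i\<in>I. real (m i) * (c i * x ^ m i))"
proof -
  have "((\<lambda>t. \<Sum>i\<in>I. c i * t ^ m i) has_field_derivative
          (\<Sum>i\<in>I. c i * (real (m i) * x ^ (m i - 1)))) (at x)"
    by (intro derivative_eq_intros) auto
  then have "deriv (\<lambda>t. \<Sum>i\<in>I. c i * t ^ m i) x = (\<Sum>i\<in>I. c i * (real (m i) * x ^ (m i - 1)))"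
    by (rule DERIV_imp_deriv)
  then have "x * deriv (\<lambda>t. \<Sum>i\<in>I. c i * t ^ m i) x =
               (\<Sum>i\<in>I. x * (c i * (real (m i) * x ^ (m i - 1))))"
    by (simp add: sum_distrib_left)
  also have "\<dots> = (\<Sum>i\<in>I. real (m i) * (c i * x ^ m i))"
    by (intro sum.cong refl) (simp add: power_eq_if)
  finally show ?thesis .
qed

lemma finite_idx: "finite (idx r n)"
proof -
  have "idx r n = {xs. set xs \<subseteq> {..<n} \<and> length xs = r}"
    unfolding idx_def by auto
  then show ?thesis
    using finite_lists_length_eq[of "{..<n}" r] by simp
qed

lemma mult_partial_PA:
  "x k * partial (PA r n A) k x =
     (\<Sum>is\<in>idx r n. real (count_list is k) * (A is * prod_list (map x is)))"
proof -
  define c where "c is = A is * prod_list (map x (filter (\<lambda>j. j \<noteq> k) is))" for "is"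
  have "PA r n A (x(k := t)) = (\<Sum>is\<in>idx r n. c is * t ^ count_list is k)" for t
    unfolding PA_def c_def prod_list_map_fun_upd by (simp add: ac_simps)
  moreover have "c is * x k ^ count_list is k = A is * prod_list (map x is)" for "is"
    using prod_list_map_fun_upd[of x k "x k" "is"] by (simp add: c_def ac_simps)
  ultimately show ?thesis
    unfolding partial_def by (simp add: mult_deriv_sum_power[OF finite_idx])
qed

lemma sum_mult_partial_PA:
  "(\<Sum>k<n. x k * partial (PA r n A) k x) = real r * PA r n A x"
proof -
  have "(\<Sum>k<n. x k * partial (PA r n A) k x) =
          (\<Sum>is\<in>idx r n. (\<Sum>k<n. real (count_list is k)) * (A is * prod_list (map x is)))"
    unfolding mult_partial_PA sum_distrib_right by (rule sum.swap)
  also have "\<dots> = (\<Sum>is\<in>idx r n. real r * (A is * prod_list (map x is)))"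
    by (intro sum.cong refl) (auto simp: idx_def sum_count_set simp flip: of_nat_sum)
  finally show ?thesis
    by (simp add: PA_def sum_distrib_left)
qed

lemma mult_mult_abs_powr: "x * (x * \<bar>x\<bar> powr (p - 2)) = \<bar>x\<bar> powr p"
  for x p :: real
proof (cases "x = 0")
  case False
  then have "\<bar>x\<bar> powr p = \<bar>x\<bar> powr 2 * \<bar>x\<bar> powr (p - 2)"
    using powr_add[of "\<bar>x\<bar>" 2 "p - 2"] by simp
  also have "\<bar>x\<bar> powr 2 = x * x"
    using False by (simp add: power2_eq_square)
  finally show ?thesis by simp
qed simp

lemma abs_le_one_if_sphere_p:
  assumes "y \<in> sphere_p n p" "p > 0" "i < n"
  shows "\<bar>y i\<bar> \<le> 1"
proof -
  have "\<bar>y i\<bar> powr p \<le> (\<Sum>j<n. \<bar>y j\<bar> powr p)"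
    using assms(3) by (intro member_le_sum) auto
  then have "\<bar>y i\<bar> powr p \<le> 1"
    using assms(1) by (simp add: sphere_p_def)
  then show ?thesis
    by (metis assms(2) not_le powr_less_mono2 powr_one_eq_one zero_le_one)
qed

lemma bdd_above_abs_PA_sphere_p:
  assumes "p > 0"
  shows "bdd_above ((\<lambda>y. \<bar>PA r n A y\<bar>) ` sphere_p n p)"
proof (rule bdd_aboveI2)
  fix y assume y: "y \<in> sphere_p n p"
  have prod_le_one: "\<bar>prod_list (map y is)\<bar> \<le> 1" if "set is \<subseteq> {..<n}" for "is"
    using that
  proof (induction "is")
    case (Cons i "is")
    then have "\<bar>y i\<bar> \<le> 1"
      using abs_le_one_if_sphere_p[OF y assms] by simp
    with Cons show ?case
      by (simp add: abs_mult mult_le_one)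
  qed simp
  have "\<bar>PA r n A y\<bar> \<le> (\<Sum>is\<in>idx r n. \<bar>A is * prod_list (map y is)\<bar>)"
    unfolding PA_def by (rule sum_abs)
  also have "\<dots> \<le> (\<Sum>is\<in>idx r n. \<bar>A is\<bar>)"
    using prod_le_one by (intro sum_mono) (auto simp: idx_def abs_mult mult_left_le)
  finally show "\<bar>PA r n A y\<bar> \<le> (\<Sum>is\<in>idx r n. \<bar>A is\<bar>)" .
qed

lemma eigenvalue_eq_PA:
  assumes "r \<ge> 1" "x \<in> sphere_p n p"
    and eigen: "\<forall>k<n. lam * (x k * \<bar>x k\<bar> powr (p - 2)) = (1 / real r) * partial (PA r n A) k x"
  shows "lam = PA r n A x"
proof -
  have "lam = lam * (\<Sum>k<n. \<bar>x k\<bar> powr p)"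
    using assms(2) by (simp add: sphere_p_def)
  also have "\<dots> = (\<Sum>k<n. x k * (lam * (x k * \<bar>x k\<bar> powr (p - 2))))"
    by (simp add: sum_distrib_left mult_mult_abs_powr mult.left_commute)
  also have "\<dots> = (\<Sum>k<n. x k * partial (PA r n A) k x) / real r"
    using eigen by (simp add: sum_divide_distrib)
  also have "\<dots> = PA r n A x"
    using assms(1) by (simp add: sum_mult_partial_PA)
  finally show ?thesis .
qed

theorem proposition9:
  fixes r n :: nat and A :: "nat list \<Rightarrow> real" and p lam :: real and x :: "nat \<Rightarrow> real"
  assumes "r \<ge> 1"
    and "symmetric_rmatrix r n A"
    and "nonneg_rmatrix r n A"
    and "p > 1"
    and "x \<in> sphere_p n p"
    and "\<forall>k<n. lam * (x k * \<bar>x k\<bar> powr (p - 2)) = (1 / real r) * partial (PA r n A) k x"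
  shows "\<bar>lam\<bar> \<le> eta r n p A"
proof -
  have "lam = PA r n A x"
    using assms(1,5,6) by (rule eigenvalue_eq_PA)
  moreover have "bdd_above ((\<lambda>y. \<bar>PA r n A y\<bar>) ` sphere_p n p)"
    using assms(4) by (intro bdd_above_abs_PA_sphere_p) simp
  ultimately show ?thesis
    unfolding eta_def using assms(5) by (intro cSUP_upper2[where x = x]) auto
qed

end
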